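(* Let $\Delta\ge 4$ be an integer and let $c_1,\dots,c_\Delta$ be defined by $c_\Delta=\frac{1}{\Delta}$ and $ic_i+c_{i+1}=1$ for $i=1,\dots,\Delta-1$. Then: (a) $\frac{1}{i+1}<c_i=\frac{1}{i+1}+\frac{c_{i+2}}{i(i+1)}$ for $1\le i\le \Delta-2$, and $c_i<\frac{i+1}{i(i+2)}$ for $1\le i\le \Delta-3$; (b) $c_{i+1}<c_i$ for $i=1,\dots,\Delta-2$; (c) if $i\le \Delta-2$ and $i\equiv \Delta \pmod 2$, then $$c_i=\frac{1}{i+1}+\sum_{j=1}^{\frac{\Delta-i-2}{2}}\frac{i+2j}{i(i+1)\cdots(i+2j+1)}+\frac{1}{i(i+1)\cdots\Delta};$$ (d) if $i\le \Delta-3$ and $i\equiv \Delta-1 \pmod 2$, then $$c_i=\frac{1}{i+1}+\sum_{j=1}^{\frac{\Delta-i-3}{2}}\frac{i+2j}{i(i+1)\cdots(i+2j+1)}+\frac{\Delta-1}{i(i+1)\cdots\Delta}.$$ (Here $i$ ranges over positive integers, and an empty sum equals $0$.) *)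

theory Defs
  imports Complex_Main
begin

end

theory Submission
  imports Defs
begin

text \<open>Solving the recurrence for c i gives c i = (1 - c (i+1)) / i, so by downward induction
  from c \<Delta> = 1/\<Delta> all terms satisfy 0 < c i \<le> 1/i. Applying the recurrence twice yields the two-step identity
  c i = 1/(i+1) + c (i+2) / (i (i+1)); the lower bound in (a) is then positivity, the upper bound
  and (b) follow from c (i+1) < 1/(i+1), and iterating the identity down to c \<Delta> = 1/\<Delta> or
  c (\<Delta>-1) = 1/\<Delta> gives the closed forms (c) and (d).\<close>

locale recurrence_seq =
  fixes \<Delta> :: nat and c :: "nat \<Rightarrow> real"
  assumes c_last: "c \<Delta> = 1 / real \<Delta>"
    and c_rec: "\<And>i. 1 \<le> i \<Longrightarrow> i < \<Delta> \<Longrightarrow> real i * c i + c (i + 1) = 1"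
begin

lemma c_pos_le_inverse:
  assumes "1 \<le> i" "i \<le> \<Delta>"
  shows "0 < c i \<and> c i \<le> 1 / real i"
  using assms(2,1)
proof (induction i rule: inc_induct)
  case base
  then show ?case using c_last by simp
next
  case (step n)
  have "c (Suc n) \<le> 1 / real (Suc n)" "1 / real (Suc n) < 1"
    using step by auto
  then have "c (Suc n) < 1"
    by linarith
  moreover have "real n * c n = 1 - c (Suc n)"
    using c_rec[of n] step by simp
  ultimately have "0 < real n * c n" "real n * c n \<le> 1"
    using step by auto
  then show ?case
    using step.prems by (simp add: zero_less_mult_iff field_simps)
qed

lemma c_pos: "1 \<le> i \<Longrightarrow> i \<le> \<Delta> \<Longrightarrow> 0 < c i"
  using c_pos_le_inverse by blast

lemma index_mult_c_less_1:
  assumes "1 \<le> i" "i < \<Delta>"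
  shows "real i * c i < 1"
  using c_rec[OF assms] c_pos[of "i + 1"] assms by simp

lemma c_less_inverse:
  assumes "1 \<le> i" "i < \<Delta>"
  shows "c i < 1 / real i"
  using index_mult_c_less_1[OF assms] assms(1) by (simp add: field_simps)

lemma c_two_step_mult:
  assumes "1 \<le> i" "i + 2 \<le> \<Delta>"
  shows "c i * (real i * (real i + 1)) = real i + c (i + 2)"
proof -
  have "c (i + 1) = 1 - real i * c i" "c (i + 2) = 1 - (real i + 1) * c (i + 1)"
    using c_rec[of i] c_rec[of "i + 1"] assms by (simp_all add: algebra_simps)
  then show ?thesis
    by algebra
qed

lemma c_two_step:
  assumes "1 \<le> i" "i + 2 \<le> \<Delta>"
  shows "c i = 1 / real (i + 1) + c (i + 2) / (real i * real (i + 1))"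
proof -
  have "real i * (real i + 1) \<noteq> 0"
    using assms(1) by simp
  then have "c i = (real i + c (i + 2)) / (real i * (real i + 1))"
    using c_two_step_mult[OF assms] by (simp add: eq_divide_eq)
  also have "\<dots> = 1 / real (i + 1) + c (i + 2) / (real i * real (i + 1))"
    using assms(1) by (simp add: add_divide_distrib add.commute)
  finally show ?thesis .
qed

lemma inverse_Suc_less_c:
  assumes "1 \<le> i" "i + 2 \<le> \<Delta>"
  shows "1 / real (i + 1) < c i"
  using c_two_step[OF assms] c_pos[of "i + 2"] assms by simp

lemma c_less_upper:
  assumes "1 \<le> i" "i + 3 \<le> \<Delta>"
  shows "c i < real (i + 1) / (real i * real (i + 2))"
proof -
  define x where "x = real i"
  have "x > 0"
    using assms(1) unfolding x_def by simp
  have "(x + 2) * c (i + 2) < 1"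
    using index_mult_c_less_1[of "i + 2"] assms unfolding x_def by (simp add: add.commute)
  have "c i * (x * (x + 1)) = x + c (i + 2)"
    using c_two_step_mult[of i] assms unfolding x_def by simp
  then have "c i * (x * (x + 2)) * (x + 1) = x * (x + 2) + (x + 2) * c (i + 2)"
    by algebra
  also have "\<dots> < (x + 1) * (x + 1)"
    using \<open>(x + 2) * c (i + 2) < 1\<close> by (simp add: algebra_simps)
  finally have "c i * (x * (x + 2)) * (x + 1) < (x + 1) * (x + 1)" .
  then have "c i * (x * (x + 2)) < x + 1"
    using \<open>x > 0\<close> by (simp add: mult_less_cancel_right_pos)
  moreover have "x * (x + 2) > 0"
    using \<open>x > 0\<close> by simp
  ultimately show ?thesis
    unfolding x_def by (simp add: pos_less_divide_eq add.commute)
qed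

lemma c_strict_decreasing:
  assumes "1 \<le> i" "i + 2 \<le> \<Delta>"
  shows "c (i + 1) < c i"
  using c_less_inverse[of "i + 1"] inverse_Suc_less_c[OF assms] assms by simp

lemma c_penultimate:
  assumes "2 \<le> \<Delta>"
  shows "c (\<Delta> - 1) = 1 / real \<Delta>"
proof -
  have "(real \<Delta> - 1) * c (\<Delta> - 1) = (real \<Delta> - 1) * (1 / real \<Delta>)"
    using c_rec[of "\<Delta> - 1"] c_last assms by (simp add: of_nat_diff field_simps)
  moreover have "real \<Delta> - 1 \<noteq> 0"
    using assms by simp
  ultimately show ?thesis
    using mult_left_cancel by blast
qed

lemma c_unfold:
  assumes "1 \<le> i" "i + 2 * m + 2 \<le> \<Delta>"
  shows "c i = 1 / real (i + 1)
    + (\<Sum>j = 1..m. real (i + 2 * j) / (\<Prod>k = i..i + 2 * j + 1. real k))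
    + c (i + 2 * m + 2) / (\<Prod>k = i..i + 2 * m + 1. real k)"
  using assms(2)
proof (induction m)
  case 0
  then show ?case
    using c_two_step[OF assms(1)] by (simp add: prod.nat_ivl_Suc')
next
  case (Suc m)
  define a where "a = i + 2 * m + 2"
  define P where "P = (\<Prod>k = i..i + 2 * m + 1. real k)"
  define S where "S n = (\<Sum>j = 1..n. real (i + 2 * j) / (\<Prod>k = i..i + 2 * j + 1. real k))" for n
  have a_eq: "i + 2 * Suc m = a"
    unfolding a_def by simp
  have "P > 0"
    unfolding P_def using assms(1) by (intro prod_pos) auto
  have prod_Suc: "(\<Prod>k = i..a + 1. real k) = P * (real a * real (a + 1))"
    unfolding P_def a_def by (simp add: prod.nat_ivl_Suc')
  have "S (Suc m) = real (i + 2 * Suc m) / (\<Prod>k = i..i + 2 * Suc m + 1. real k) + S m"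
    unfolding S_def by (rule sum.nat_ivl_Suc') simp
  then have S_Suc: "S (Suc m) = real a / (P * (real a * real (a + 1))) + S m"
    unfolding a_eq prod_Suc .
  have "c a / P = c a * (real a * real (a + 1)) / (P * (real a * real (a + 1)))"
    unfolding a_def by simp
  also have "\<dots> = real a / (P * (real a * real (a + 1))) + c (a + 2) / (P * (real a * real (a + 1)))"
    using c_two_step_mult[of a] Suc.prems unfolding a_def by (simp add: add_divide_distrib)
  finally have c_a: "c a / P = \<dots>" .
  have "c i = 1 / real (i + 1) + S m + c a / P"
    using Suc unfolding S_def a_def P_def by simp
  then have "c i = 1 / real (i + 1) + S (Suc m) + c (a + 2) / (P * (real a * real (a + 1)))"
    unfolding c_a S_Suc by simp
  then show ?case
    unfolding a_eq prod_Suc S_def[symmetric] .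
qed

lemma c_closed_form_even:
  assumes "1 \<le> i" "i + 2 \<le> \<Delta>" "even (\<Delta> - i)"
  shows "c i = 1 / real (i + 1)
    + (\<Sum>j = 1..(\<Delta> - i - 2) div 2. real (i + 2 * j) / (\<Prod>k = i..i + 2 * j + 1. real k))
    + 1 / (\<Prod>k = i..\<Delta>. real k)"
proof -
  define m where "m = (\<Delta> - i - 2) div 2"
  have \<Delta>_eq: "\<Delta> = i + 2 * m + 2"
    using assms unfolding m_def by (auto elim!: evenE)
  have "c i = 1 / real (i + 1)
      + (\<Sum>j = 1..m. real (i + 2 * j) / (\<Prod>k = i..i + 2 * j + 1. real k))
      + c (i + 2 * m + 2) / (\<Prod>k = i..i + 2 * m + 1. real k)"
    using c_unfold assms(1) \<Delta>_eq by simp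
  also have "c (i + 2 * m + 2) / (\<Prod>k = i..i + 2 * m + 1. real k) = 1 / (\<Prod>k = i..\<Delta>. real k)"
    unfolding \<Delta>_eq[symmetric] c_last by (simp add: \<Delta>_eq prod.nat_ivl_Suc')
  finally show ?thesis
    unfolding m_def .
qed

lemma c_closed_form_odd:
  assumes "1 \<le> i" "i + 3 \<le> \<Delta>" "odd (\<Delta> - i)"
  shows "c i = 1 / real (i + 1)
    + (\<Sum>j = 1..(\<Delta> - i - 3) div 2. real (i + 2 * j) / (\<Prod>k = i..i + 2 * j + 1. real k))
    + real (\<Delta> - 1) / (\<Prod>k = i..\<Delta>. real k)"
proof -
  define m where "m = (\<Delta> - i - 3) div 2"
  have \<Delta>_eq: "\<Delta> = i + 2 * m + 3"
    using assms unfolding m_def by (auto elim!: oddE)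
  have "c i = 1 / real (i + 1)
      + (\<Sum>j = 1..m. real (i + 2 * j) / (\<Prod>k = i..i + 2 * j + 1. real k))
      + c (i + 2 * m + 2) / (\<Prod>k = i..i + 2 * m + 1. real k)"
    using c_unfold assms(1) \<Delta>_eq by simp
  also have "c (i + 2 * m + 2) = 1 / real \<Delta>"
    using c_penultimate \<Delta>_eq by simp
  also have "1 / real \<Delta> / (\<Prod>k = i..i + 2 * m + 1. real k) = real (\<Delta> - 1) / (\<Prod>k = i..\<Delta>. real k)"
  proof -
    have "\<Delta> = Suc (Suc (i + 2 * m + 1))"
      using \<Delta>_eq by simp
    then have "(\<Prod>k = i..\<Delta>. real k) = (\<Prod>k = i..i + 2 * m + 1. real k) * real (\<Delta> - 1) * real \<Delta>"
      by (simp add: prod.nat_ivl_Suc')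
    moreover have "real (\<Delta> - 1) \<noteq> 0"
      using \<Delta>_eq by simp
    ultimately show ?thesis
      by simp
  qed
  finally show ?thesis
    unfolding m_def .
qed

end

theorem lemma1:
  fixes \<Delta> :: nat and c :: "nat \<Rightarrow> real"
  assumes D: "\<Delta> \<ge> 4"
    and cD: "c \<Delta> = 1 / real \<Delta>"
    and rec: "\<And>i. 1 \<le> i \<Longrightarrow> i \<le> \<Delta> - 1 \<Longrightarrow> real i * c i + c (i + 1) = 1"
  shows "(\<forall>i. 1 \<le> i \<and> i \<le> \<Delta> - 2 \<longrightarrow>
            1 / real (i + 1) < c i \<and>
            c i = 1 / real (i + 1) + c (i + 2) / (real i * real (i + 1)))
       \<and> (\<forall>i. 1 \<le> i \<and> i \<le> \<Delta> - 3 \<longrightarrow>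
            c i < real (i + 1) / (real i * real (i + 2)))
       \<and> (\<forall>i. 1 \<le> i \<and> i \<le> \<Delta> - 2 \<longrightarrow> c (i + 1) < c i)
       \<and> (\<forall>i. 1 \<le> i \<and> i \<le> \<Delta> - 2 \<and> even (\<Delta> - i) \<longrightarrow>
            c i = 1 / real (i + 1)
              + (\<Sum>j = 1..(\<Delta> - i - 2) div 2.
                   real (i + 2 * j) / (\<Prod>k = i..i + 2 * j + 1. real k))
              + 1 / (\<Prod>k = i..\<Delta>. real k))
       \<and> (\<forall>i. 1 \<le> i \<and> i \<le> \<Delta> - 3 \<and> odd (\<Delta> - i) \<longrightarrow>
            c i = 1 / real (i + 1)
              + (\<Sum>j = 1..(\<Delta> - i - 3) div 2.
                   real (i + 2 * j) / (\<Prod>k = i..i + 2 * j + 1. real k))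
              + real (\<Delta> - 1) / (\<Prod>k = i..\<Delta>. real k))"
proof -
  interpret recurrence_seq \<Delta> c
    using cD rec by unfold_locales simp_all
  have "i + 2 \<le> \<Delta>" if "i \<le> \<Delta> - 2" for i
    using that D by simp
  moreover have "i + 3 \<le> \<Delta>" if "i \<le> \<Delta> - 3" for i
    using that D by simp
  ultimately show ?thesis
    using inverse_Suc_less_c c_two_step c_less_upper c_strict_decreasing
      c_closed_form_even c_closed_form_odd
    by blast
qed

end
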